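(* Let $d\ge 1$ and $n\ge 1$ be integers, let $R=\mathbb{Q}[a_{i,j}:1\le i,j\le n]$, and fix $i,j,l\in\{1,\dots,n\}$ (not necessarily distinct). Then \[ z(\mathrm{fern}_{d,n},\mu(i,j,l))=(B^n)_{i,j}, \] where $B$ is the $n\times n$ matrix over $R$ with entries $B_{u,v}=a_{u,v}\,a_{u,l}^{\,d-1}$.
   Context: $\mathrm{fern}_{d,n}$ is the rooted plane tree with a path $v_0,v_1,\dots,v_n$ where $v_0$ is the root, each of $v_0,\dots,v_{n-1}$ has exactly $d$ children of which the leftmost is $v_{k+1}$ and the other $d-1$ are leaves, and $v_n$ is a leaf (so it has $n$ vertices with $d$ children, each such vertex has at most one non-leaf child, and that child is leftmost). A labeling of a rooted plane tree $T$ is a map $\lambda\colon V(T)\to\{1,\dots,n\}$; for an edge $e$ from parent $v$ to child $u$ put $w(e,\lambda)=a_{\lambda(v),\lambda(u)}$ and $w(T,\lambda)=\prod_{e}w(e,\lambda)$. A root-leaf labeling is a map $\mu$ from the set consisting of the root and the leaves of $T$ to $\{1,\dots,n\}$, and $z(T,\mu)=\sum_{\lambda}w(T,\lambda)$, the sum over all labelings $\lambda$ of $T$ agreeing with $\mu$ on the root and leaves. $\mu(i,j,l)$ is the root-leaf labeling of $\mathrm{fern}_{d,n}$ that labels the root $i$, the leaf $v_n$ by $j$, and every other leaf by $l$. *)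

theory Defs
  imports "HOL-Library.FuncSet" "Jordan_Normal_Form.Matrix"
begin

datatype ptree = Node "ptree list"

text \<open>Vertices are addressed by positions (paths of child indices from the root,
  children numbered 0,1,... from left to right). The root is the empty position.\<close>
fun subtree :: "ptree \<Rightarrow> nat list \<Rightarrow> ptree option" where
  "subtree t [] = Some t"
| "subtree (Node ts) (i # p) = (if i < length ts then subtree (ts ! i) p else None)"

definition vertices :: "ptree \<Rightarrow> nat list set" where
  "vertices t = {p. subtree t p \<noteq> None}"

definition children :: "ptree \<Rightarrow> ptree list" where
  "children t = (case t of Node ts \<Rightarrow> ts)"

definition leaves :: "ptree \<Rightarrow> nat list set" where
  "leaves t = {p \<in> vertices t. children (the (subtree t p)) = []}"

text \<open>Edges: from parent position p to child position p @ [k]; so every non-root vertex q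
  is the child end of exactly one edge, whose parent end is butlast q.\<close>
definition root_leaves :: "ptree \<Rightarrow> nat list set" where
  "root_leaves t = insert [] (leaves t)"

definition labelings :: "nat \<Rightarrow> ptree \<Rightarrow> (nat list \<Rightarrow> nat) set" where
  "labelings n t = vertices t \<rightarrow>\<^sub>E {1..n}"

definition tree_weight :: "(nat \<Rightarrow> nat \<Rightarrow> 'a::comm_ring_1) \<Rightarrow> ptree \<Rightarrow> (nat list \<Rightarrow> nat) \<Rightarrow> 'a" where
  "tree_weight a t lam = (\<Prod>q \<in> vertices t - {[]}. a (lam (butlast q)) (lam q))"

definition zval :: "(nat \<Rightarrow> nat \<Rightarrow> 'a::comm_ring_1) \<Rightarrow> nat \<Rightarrow> ptree \<Rightarrow> (nat list \<Rightarrow> nat) \<Rightarrow> 'a" where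
  "zval a n t mu = (\<Sum>lam \<in> {lam \<in> labelings n t. \<forall>p \<in> root_leaves t. lam p = mu p}. tree_weight a t lam)"

fun fern :: "nat \<Rightarrow> nat \<Rightarrow> ptree" where
  "fern d 0 = Node []"
| "fern d (Suc k) = Node (fern d k # replicate (d - 1) (Node []))"

definition fern_mu :: "nat \<Rightarrow> nat \<Rightarrow> nat \<Rightarrow> nat \<Rightarrow> nat list \<Rightarrow> nat" where
  "fern_mu n i j l p = (if p = [] then i else if p = replicate n 0 then j else l)"

end

theory Submission
  imports Defs
begin

(* Cut fern_{d,k+1} below its root: the root (label i) is joined to the spine vertex v_1
   (label u, summed over) and to d - 1 leaves labelled l, contributing a_{i,u} a_{i,l}^(d-1),
   and v_1 is the root of a copy of fern_{d,k}.  Hence z_{k+1}(i) = sum_u B_{i,u} z_k(u),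
   while z_0(i) is 1 if i = j and 0 otherwise; this is the recursion satisfied by the
   entries (B^k)_{i,j}. *)

lemma vertices_Node:
  "vertices (Node ts) = insert [] (\<Union>c<length ts. Cons c ` vertices (ts ! c))"
proof (rule Set.set_eqI)
  show "p \<in> vertices (Node ts) \<longleftrightarrow>
      p \<in> insert [] (\<Union>c<length ts. Cons c ` vertices (ts ! c))" for p
    by (cases p) (auto simp: vertices_def split: if_splits)
qed

lemma leaves_Node:
  "leaves (Node ts) = (if ts = [] then {[]} else \<Union>c<length ts. Cons c ` leaves (ts ! c))"
proof (rule Set.set_eqI)
  show "p \<in> leaves (Node ts) \<longleftrightarrow>
      p \<in> (if ts = [] then {[]} else \<Union>c<length ts. Cons c ` leaves (ts ! c))" for p
    by (cases p) (auto simp: leaves_def vertices_def children_def split: if_splits)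
qed

lemma Nil_in_vertices [simp]: "[] \<in> vertices t"
  by (simp add: vertices_def)

lemma finite_vertices [simp]: "finite (vertices t)"
  by (induction t) (auto simp: vertices_Node)

lemma butlast_in_vertices: "q \<in> vertices t \<Longrightarrow> butlast q \<in> vertices t"
proof (induction q arbitrary: t)
  case (Cons c q)
  then show ?case
    by (cases t) (auto simp: vertices_Node split: if_splits)
qed simp

lemma tree_weight_cong:
  "(\<And>p. p \<in> vertices t \<Longrightarrow> lam p = lam' p) \<Longrightarrow> tree_weight a t lam = tree_weight a t lam'"
  unfolding tree_weight_def by (intro prod.cong) (auto simp: butlast_in_vertices)

lemma tree_weight_leaf [simp]: "tree_weight a (Node []) lam = 1"
  by (simp add: tree_weight_def vertices_Node)

lemma tree_weight_Node:
  "tree_weight a (Node ts) lam =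
    (\<Prod>c<length ts. a (lam []) (lam [c]) * tree_weight a (ts ! c) (\<lambda>q. lam (c # q)))"
proof -
  let ?g = "\<lambda>q. a (lam (butlast q)) (lam q)"
  have edges: "vertices (Node ts) - {[]} = (\<Union>c<length ts. Cons c ` vertices (ts ! c))"
    by (auto simp: vertices_Node)
  have "tree_weight a (Node ts) lam = (\<Prod>c<length ts. \<Prod>q\<in>Cons c ` vertices (ts ! c). ?g q)"
    unfolding tree_weight_def edges by (subst prod.UNION_disjoint) auto
  also have "\<dots> = (\<Prod>c<length ts. \<Prod>q\<in>vertices (ts ! c). ?g (c # q))"
    by (simp add: prod.reindex)
  also have "\<dots> = (\<Prod>c<length ts. ?g [c] * (\<Prod>q\<in>vertices (ts ! c) - {[]}. ?g (c # q)))"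
    by (intro prod.cong refl) (simp add: prod.remove[where x = "[]"] del: butlast.simps)
  also have "\<dots> = (\<Prod>c<length ts. a (lam []) (lam [c]) * tree_weight a (ts ! c) (\<lambda>q. lam (c # q)))"
    unfolding tree_weight_def by (intro prod.cong refl arg_cong2[where f = "(*)"]) auto
  finally show ?thesis .
qed

lemma leaves_subset_vertices: "leaves t \<subseteq> vertices t"
  by (auto simp: leaves_def)

lemma vertices_spine:
  "vertices (Node (t0 # replicate m (Node []))) =
    insert [] (Cons 0 ` vertices t0 \<union> (\<lambda>c. [Suc c]) ` {..<m})"
  by (auto simp: vertices_Node lessThan_Suc_eq_insert_0)

lemma leaves_spine:
  "leaves (Node (t0 # replicate m (Node []))) = Cons 0 ` leaves t0 \<union> (\<lambda>c. [Suc c]) ` {..<m}"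
  by (auto simp: leaves_Node lessThan_Suc_eq_insert_0)

lemma tree_weight_spine:
  "tree_weight a (Node (t0 # replicate m (Node []))) lam =
    a (lam []) (lam [0]) * tree_weight a t0 (\<lambda>q. lam (0 # q)) * (\<Prod>c<m. a (lam []) (lam [Suc c]))"
  by (simp add: tree_weight_Node prod.lessThan_Suc_shift del: prod.lessThan_Suc)

definition rooted_labelings ::
    "nat \<Rightarrow> ptree \<Rightarrow> nat \<Rightarrow> (nat list \<Rightarrow> nat) \<Rightarrow> (nat list \<Rightarrow> nat) set" where
  "rooted_labelings N t i f = {lam \<in> labelings N t. lam [] = i \<and> (\<forall>p\<in>leaves t. lam p = f p)}"

definition zval_root ::
    "(nat \<Rightarrow> nat \<Rightarrow> 'a::comm_ring_1) \<Rightarrow> nat \<Rightarrow> ptree \<Rightarrow> nat \<Rightarrow> (nat list \<Rightarrow> nat) \<Rightarrow> 'a" where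
  "zval_root a N t i f = (\<Sum>lam\<in>rooted_labelings N t i f. tree_weight a t lam)"

lemma finite_rooted_labelings [simp]: "finite (rooted_labelings N t i f)"
  unfolding rooted_labelings_def labelings_def by (simp add: finite_PiE)

lemma zval_eq_zval_root: "zval a N t mu = zval_root a N t (mu []) mu"
  by (simp add: zval_def zval_root_def rooted_labelings_def root_leaves_def)

lemma zval_root_cong:
  "(\<And>p. p \<in> leaves t \<Longrightarrow> f p = g p) \<Longrightarrow> zval_root a N t i f = zval_root a N t i g"
  unfolding zval_root_def rooted_labelings_def by (intro sum.cong) auto

lemma zval_root_leaf: "zval_root a N (Node []) i f = (if i = f [] \<and> i \<in> {1..N} then 1 else 0)"
proof -
  have "rooted_labelings N (Node []) i f =
      (if i = f [] \<and> i \<in> {1..N} then {\<lambda>p. if p = [] then i else undefined} else {})"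
    by (auto simp: rooted_labelings_def labelings_def vertices_Node leaves_Node PiE_def
        extensional_def fun_eq_iff)
  then show ?thesis
    by (simp add: zval_root_def)
qed

lemma rooted_labelings_spine_iff:
  assumes "\<And>c. c < m \<Longrightarrow> f [Suc c] = l"
  shows "lam \<in> rooted_labelings N (Node (t0 # replicate m (Node []))) i f \<longleftrightarrow>
    lam \<in> insert [] (Cons 0 ` vertices t0 \<union> (\<lambda>c. [Suc c]) ` {..<m}) \<rightarrow>\<^sub>E {1..N} \<and>
    lam [] = i \<and>
    (\<forall>q\<in>leaves t0. lam (0 # q) = f (0 # q)) \<and> (\<forall>c<m. lam [Suc c] = l)"
  using assms by (auto simp: rooted_labelings_def labelings_def vertices_spine leaves_spine)

lemma rooted_labelings_spine_bij:
  assumes "i \<in> {1..N}" and "l \<in> {1..N}" and "\<And>c. c < m \<Longrightarrow> f [Suc c] = l"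
  shows "bij_betw (\<lambda>lam. (lam [0], restrict (\<lambda>q. lam (0 # q)) (vertices t0)))
    (rooted_labelings N (Node (t0 # replicate m (Node []))) i f)
    (SIGMA u:{1..N}. rooted_labelings N t0 u (\<lambda>q. f (0 # q)))"
    (is "bij_betw ?split ?S ?T")
proof -
  define extend where "extend mu p =
    (if p = [] then i else if hd p = 0 then mu (tl p)
     else if p \<in> (\<lambda>c. [Suc c]) ` {..<m} then l else undefined)" for mu :: "nat list \<Rightarrow> nat" and p
  note spine_iff = rooted_labelings_spine_iff[where f = f, OF assms(3)]
  note leaves_in = subsetD[OF leaves_subset_vertices]
  show ?thesis
  proof (rule bij_betwI[where g = "\<lambda>(u, mu). extend mu"])
    show "?split \<in> ?S \<rightarrow> ?T"
    proof
      fix lam assume "lam \<in> ?S"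
      then have "lam \<in> insert [] (Cons 0 ` vertices t0 \<union> (\<lambda>c. [Suc c]) ` {..<m})
          \<rightarrow>\<^sub>E {1..N}"
        and "\<forall>q\<in>leaves t0. lam (0 # q) = f (0 # q)"
        by (simp_all add: spine_iff)
      then show "?split lam \<in> ?T"
        by (auto simp: rooted_labelings_def labelings_def leaves_in PiE_iff)
    qed
    show "(\<lambda>(u, mu). extend mu) \<in> ?T \<rightarrow> ?S"
    proof
      fix y assume "y \<in> ?T"
      then obtain u mu where y: "y = (u, mu)" and mu: "mu \<in> vertices t0 \<rightarrow>\<^sub>E {1..N}"
        "\<forall>q\<in>leaves t0. mu q = f (0 # q)"
        by (auto simp: rooted_labelings_def labelings_def)
      have "extend mu \<in> ?S"
        using assms(1,2) mu
        by (subst spine_iff)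
          (auto simp: extend_def leaves_in PiE_def extensional_def neq_Nil_conv image_iff)
      then show "(\<lambda>(u, mu). extend mu) y \<in> ?S"
        by (simp add: y)
    qed
    show "(\<lambda>(u, mu). extend mu) (?split lam) = lam" if "lam \<in> ?S" for lam
    proof
      fix p
      have lam: "lam \<in> insert [] (Cons 0 ` vertices t0 \<union> (\<lambda>c. [Suc c]) ` {..<m})
          \<rightarrow>\<^sub>E {1..N}" "lam [] = i" "\<forall>c<m. lam [Suc c] = l"
        using that by (simp_all add: spine_iff)
      show "(\<lambda>(u, mu). extend mu) (?split lam) p = lam p"
      proof (cases "p \<in> insert [] (Cons 0 ` vertices t0 \<union> (\<lambda>c. [Suc c]) ` {..<m})")
        case True
        then show ?thesis
          using lam(2,3) by (auto simp: extend_def)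
      next
        case False
        then show ?thesis
          by (auto simp: extend_def PiE_arb[OF lam(1)] neq_Nil_conv)
      qed
    qed
    show "?split ((\<lambda>(u, mu). extend mu) y) = y" if "y \<in> ?T" for y
      using that by (auto simp: rooted_labelings_def labelings_def extend_def PiE_def
          extensional_def fun_eq_iff)
  qed
qed

lemma zval_root_spine:
  assumes "i \<in> {1..N}" and "l \<in> {1..N}" and leaf_labels: "\<And>c. c < m \<Longrightarrow> f [Suc c] = l"
  shows "zval_root a N (Node (t0 # replicate m (Node []))) i f =
    (\<Sum>u = 1..N. a i u * a i l ^ m * zval_root a N t0 u (\<lambda>q. f (0 # q)))"
proof -
  let ?t = "Node (t0 # replicate m (Node []))"
  let ?split = "\<lambda>lam. (lam [0], restrict (\<lambda>q. lam (0 # q)) (vertices t0))"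
  define w where "w = (\<lambda>(u, mu). a i u * a i l ^ m * tree_weight a t0 mu)"
  have "tree_weight a ?t lam = w (?split lam)" if "lam \<in> rooted_labelings N ?t i f" for lam
  proof -
    have "lam [] = i" and "\<forall>c<m. lam [Suc c] = l"
      using that by (simp_all add: rooted_labelings_spine_iff[where f = f, OF leaf_labels])
    moreover have "tree_weight a t0 (\<lambda>q. lam (0 # q)) =
        tree_weight a t0 (restrict (\<lambda>q. lam (0 # q)) (vertices t0))"
      by (rule tree_weight_cong) simp
    ultimately show ?thesis
      by (simp add: tree_weight_spine w_def)
  qed
  then have "zval_root a N ?t i f = (\<Sum>lam\<in>rooted_labelings N ?t i f. w (?split lam))"
    unfolding zval_root_def by (rule sum.cong[OF refl])
  also have "\<dots> = (\<Sum>y\<in>(SIGMA u:{1..N}. rooted_labelings N t0 u (\<lambda>q. f (0 # q))). w y)"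
    by (rule sum.reindex_bij_betw[OF rooted_labelings_spine_bij[where f = f, OF assms]])
  also have "\<dots> = (\<Sum>u = 1..N. a i u * a i l ^ m * zval_root a N t0 u (\<lambda>q. f (0 # q)))"
    by (simp add: sum.Sigma[symmetric] w_def zval_root_def sum_distrib_left)
  finally show ?thesis .
qed

(* On fern d 0 the root is the leaf v_0 and must get the label j, not the root label i that
   fern_mu gives it; so the induction runs over root label and leaf labels separately. *)
definition fern_leaf_label :: "nat \<Rightarrow> nat \<Rightarrow> nat \<Rightarrow> nat list \<Rightarrow> nat" where
  "fern_leaf_label k j l p = (if p = replicate k 0 then j else l)"

lemma zval_root_fern_0:
  "zval_root a N (fern d 0) i (fern_leaf_label 0 j l) = (if i = j \<and> i \<in> {1..N} then 1 else 0)"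
  by (simp add: zval_root_leaf fern_leaf_label_def)

lemma zval_root_fern_Suc:
  assumes "i \<in> {1..N}" and "l \<in> {1..N}"
  shows "zval_root a N (fern d (Suc k)) i (fern_leaf_label (Suc k) j l) =
    (\<Sum>u = 1..N. a i u * a i l ^ (d - 1) * zval_root a N (fern d k) u (fern_leaf_label k j l))"
proof -
  have "(\<lambda>q. fern_leaf_label (Suc k) j l (0 # q)) = fern_leaf_label k j l"
    by (simp add: fern_leaf_label_def fun_eq_iff)
  moreover have "fern_leaf_label (Suc k) j l [Suc c] = l" for c
    by (simp add: fern_leaf_label_def)
  ultimately show ?thesis
    using zval_root_spine[OF assms, of "d - 1" "fern_leaf_label (Suc k) j l" a "fern d k"] by simp
qed

lemma pow_mat_Suc_left:
  assumes "A \<in> carrier_mat N N"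
  shows "A ^\<^sub>m Suc k = A * A ^\<^sub>m k"
proof (induction k)
  case (Suc k)
  have "A ^\<^sub>m Suc (Suc k) = (A * A ^\<^sub>m k) * A"
    using Suc by simp
  also have "\<dots> = A * (A ^\<^sub>m k * A)"
    using assms by (intro assoc_mult_mat) auto
  finally show ?case by simp
qed (use assms in simp)

lemma pow_mat_index_eq_recurrence:
  fixes b :: "nat \<Rightarrow> nat \<Rightarrow> 'a::semiring_1" and P :: "nat \<Rightarrow> nat \<Rightarrow> nat \<Rightarrow> 'a"
  assumes P_0: "\<And>i j. i \<in> {1..N} \<Longrightarrow> j \<in> {1..N} \<Longrightarrow> P 0 i j = (if i = j then 1 else 0)"
    and P_Suc: "\<And>k i j. i \<in> {1..N} \<Longrightarrow> j \<in> {1..N} \<Longrightarrow>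
      P (Suc k) i j = (\<Sum>u = 1..N. b i u * P k u j)"
    and "i \<in> {1..N}" and j: "j \<in> {1..N}"
  shows "P k i j = (mat N N (\<lambda>(u, v). b (u + 1) (v + 1)) ^\<^sub>m k) $$ (i - 1, j - 1)"
  using \<open>i \<in> {1..N}\<close>
proof (induction k arbitrary: i)
  case 0
  then show ?case
    using j by (auto simp: P_0)
next
  case (Suc k)
  define B where "B = mat N N (\<lambda>(u, v). b (u + 1) (v + 1))"
  have B: "B \<in> carrier_mat N N" and dim_B: "dim_row B = N" "dim_col B = N"
    by (simp_all add: B_def)
  have ij: "i - 1 < N" "j - 1 < N"
    using Suc.prems j by auto
  have "(B ^\<^sub>m Suc k) $$ (i - 1, j - 1) = row B (i - 1) \<bullet> col (B ^\<^sub>m k) (j - 1)"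
    unfolding pow_mat_Suc_left[OF B] using ij by (intro index_mult_mat(1)) (simp_all add: dim_B)
  also have "\<dots> = (\<Sum>x<N. B $$ (i - 1, x) * (B ^\<^sub>m k) $$ (x, j - 1))"
    using ij by (simp add: scalar_prod_def lessThan_atLeast0 dim_B)
  also have "\<dots> = (\<Sum>x<N. b i (Suc x) * P k (Suc x) j)"
    using Suc.prems by (intro sum.cong) (auto simp: B_def Suc.IH)
  also have "\<dots> = P (Suc k) i j"
    using Suc.prems j
    by (simp add: P_Suc sum.atLeast1_atMost_eq)
  finally show ?case
    by (simp add: B_def)
qed

theorem mainTheorem3:
  fixes a :: "nat \<Rightarrow> nat \<Rightarrow> 'a::comm_ring_1"
    and d n i j l :: nat
  assumes "d \<ge> 1" and "n \<ge> 1"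
    and "i \<in> {1..n}" and "j \<in> {1..n}" and "l \<in> {1..n}"
  shows "zval a n (fern d n) (fern_mu n i j l) =
    (mat n n (\<lambda>(u, v). a (u + 1) (v + 1) * a (u + 1) l ^ (d - 1)) ^\<^sub>m n) $$ (i - 1, j - 1)"
proof -
  obtain k where k: "n = Suc k"
    using \<open>n \<ge> 1\<close> by (cases n) auto
  have root_not_leaf: "[] \<notin> leaves (fern d n)"
    by (auto simp: k leaves_spine)
  have "zval a n (fern d n) (fern_mu n i j l) = zval_root a n (fern d n) i (fern_mu n i j l)"
    by (simp add: zval_eq_zval_root fern_mu_def)
  also have "\<dots> = zval_root a n (fern d n) i (fern_leaf_label n j l)"
    using root_not_leaf by (intro zval_root_cong) (auto simp: fern_mu_def fern_leaf_label_def)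
  also have "\<dots> = (mat n n (\<lambda>(u, v). a (u + 1) (v + 1) * a (u + 1) l ^ (d - 1)) ^\<^sub>m n)
      $$ (i - 1, j - 1)"
    using assms(3-5)
    by (intro pow_mat_index_eq_recurrence
          [where P = "\<lambda>k i j. zval_root a n (fern d k) i (fern_leaf_label k j l)"])
      (simp_all add: zval_root_fern_0 zval_root_fern_Suc del: fern.simps)
  finally show ?thesis .
qed

end
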